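(* Suppose the agent is risk neutral ($v$ is the identity) and not protected by limited liability (transfers may be any real numbers). Then every $F\in\mathcal{F}(\mu)$ with $\operatorname{supp}(F)\subseteq\operatorname{int}\Delta(\Theta)$ can be implemented efficiently, i.e. at expected cost to the principal equal to $C(F)+v_0$.
   Context: Let $\Theta=\{\theta_1,\dots,\theta_n\}$ be a finite set of states and $\mu\in\Delta(\Theta)$ a full-support prior; a belief $\mathbf{x}$ has entries $x^k$ = probability of $\theta_k$. $\mathcal{F}(\mu)$ is the set of Bayes-plausible distributions over posteriors (probability measures on $\Delta(\Theta)$ with barycenter $\mu$). Acquiring $F$ costs $C(F)=\kappa\int c\,dF$, $\kappa>0$, $c:\Delta(\Theta)\to\mathbb{R}_+$ strictly convex, twice continuously differentiable, bounded on the interior of $\Delta(\Theta)$, $c(\mu)=0$. A contract $(M,t)$: compact message set $M$ and transfer $t:M\times\Theta\to\mathbb{R}$ (paid in money equal to utils, since the agent is risk neutral). The agent has outside option $v_0\ge 0$. Timing: the principal offers $(M,t)$; the agent rejects (getting $v_0$) or accepts, chooses any $G\in\mathcal{F}(\mu)$ paying $C(G)$, privately observes a posterior $\mathbf{x}\sim G$, then walks away (getting $v_0$) or sends $d\in M$ and receives $t(d,\theta)$ in realized state $\theta$. $N(\mathbf{x}\mid d)=\sum_k x^k t(d,\theta_k)-\kappa c(\mathbf{x})$. $(M,t)$ implements $F$ if $M=\operatorname{supp}(F)$ and "accept, acquire $F$, send the realized posterior $\mathbf{x}$ as message" is optimal for the agent among all strategies (rejecting; or accepting, acquiring any $G$,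 and at each posterior sending any possibly randomized message or walking away). The principal's expected cost is $\int\sum_k x^k t(\mathbf{x},\theta_k)\,dF(\mathbf{x})$. $F$ is implemented efficiently if it is implemented at the first-best cost, which for a risk-neutral agent is $C(F)+v_0$. *)

theory Defs
  imports "HOL-Analysis.Analysis" "HOL-Probability.Probability"
begin

text \<open>States are the elements of a finite type 's; a belief is a vector x :: real^'s
  whose component x$k is the probability of state k.\<close>

definition belief_simplex :: "(real^'s::finite) set" where
  "belief_simplex = {x. (\<forall>k. 0 \<le> x$k) \<and> (\<Sum>k\<in>UNIV. x$k) = 1}"

definition belief_int :: "(real^'s::finite) set" where
  "belief_int = {x. (\<forall>k. 0 < x$k) \<and> (\<Sum>k\<in>UNIV. x$k) = 1}"

definition strictly_convex_on :: "'a::real_vector set \<Rightarrow> ('a \<Rightarrow> real) \<Rightarrow> bool" where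
  "strictly_convex_on S f \<longleftrightarrow>
     (\<forall>x\<in>S. \<forall>y\<in>S. \<forall>u::real. x \<noteq> y \<longrightarrow> 0 < u \<longrightarrow> u < 1 \<longrightarrow>
        f (u *\<^sub>R x + (1 - u) *\<^sub>R y) < u * f x + (1 - u) * f y)"

definition C2_on :: "'a::euclidean_space set \<Rightarrow> ('a \<Rightarrow> real) \<Rightarrow> bool" where
  "C2_on U f \<longleftrightarrow>
     (\<exists>D D2. (\<forall>x\<in>U. (f has_derivative blinfun_apply (D x)) (at x)) \<and>
             (\<forall>x\<in>U. (D has_derivative blinfun_apply (D2 x)) (at x)) \<and>
             continuous_on U D2)"

definition C2_on_simplex_int :: "(real^'s::finite \<Rightarrow> real) \<Rightarrow> bool" where
  "C2_on_simplex_int c \<longleftrightarrow>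
     (\<exists>U g. open U \<and> belief_int \<subseteq> U \<and> C2_on U g \<and> (\<forall>x\<in>belief_int. g x = c x))"

definition measure_support :: "'a::topological_space measure \<Rightarrow> 'a set" where
  "measure_support F = {x. \<forall>U. open U \<longrightarrow> x \<in> U \<longrightarrow> emeasure F U > 0}"

definition bayes_plausible :: "real^'s::finite \<Rightarrow> (real^'s) measure \<Rightarrow> bool" where
  "bayes_plausible mu F \<longleftrightarrow>
     sets F = sets borel \<and> prob_space F \<and> emeasure F belief_simplex = 1 \<and>
     integral\<^sup>L F (\<lambda>x. x) = mu"

definition info_cost :: "real \<Rightarrow> (real^'s::finite \<Rightarrow> real) \<Rightarrow> (real^'s) measure \<Rightarrow> real" where
  "info_cost kappa c F = kappa * integral\<^sup>L F c"

definition exp_transfer :: "(real^'s::finite \<Rightarrow> 's \<Rightarrow> real) \<Rightarrow> real^'s \<Rightarrow> real^'s \<Rightarrow> real" where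
  "exp_transfer t x d = (\<Sum>k\<in>UNIV. x$k * t d k)"

text \<open>Agent's payoff from accepting, acquiring G and using the (possibly randomised)
  reporting rule K: at posterior x, K x is a sub-probability measure on the message set
  Ms; the missing mass 1 - K x (Ms) is the probability of walking away (payoff v0).\<close>
definition deviation_payoff ::
  "real \<Rightarrow> (real^'s::finite \<Rightarrow> real) \<Rightarrow> real \<Rightarrow> (real^'s) set \<Rightarrow> (real^'s \<Rightarrow> 's \<Rightarrow> real)
    \<Rightarrow> (real^'s) measure \<Rightarrow> (real^'s \<Rightarrow> (real^'s) measure) \<Rightarrow> real" where
  "deviation_payoff kappa c v0 Ms t G K =
     (\<integral>x. (\<integral>d. exp_transfer t x d \<partial>(K x)) + (1 - measure (K x) Ms) * v0 \<partial>G)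
     - info_cost kappa c G"

definition truthful_payoff ::
  "real \<Rightarrow> (real^'s::finite \<Rightarrow> real) \<Rightarrow> (real^'s \<Rightarrow> 's \<Rightarrow> real) \<Rightarrow> (real^'s) measure \<Rightarrow> real" where
  "truthful_payoff kappa c t F = (\<integral>x. exp_transfer t x x \<partial>F) - info_cost kappa c F"

definition principal_cost :: "(real^'s::finite \<Rightarrow> 's \<Rightarrow> real) \<Rightarrow> (real^'s) measure \<Rightarrow> real" where
  "principal_cost t F = (\<integral>x. exp_transfer t x x \<partial>F)"

text \<open>Transfers are required to be bounded on Ms and
  Borel measurable, so that all payoffs are well defined.  Deviations range over all
  Bayes-plausible G with integrable cost (others have infinite or undefined cost) and all
  measurable randomised reporting/walk-away rules.\<close>
definition implements ::
  "real^'s::finite \<Rightarrow> real \<Rightarrow> (real^'s \<Rightarrow> real) \<Rightarrow> real \<Rightarrow> (real^'s) set \<Rightarrow> (real^'s \<Rightarrow> 's \<Rightarrow> real)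
    \<Rightarrow> (real^'s) measure \<Rightarrow> bool" where
  "implements mu kappa c v0 Ms t F \<longleftrightarrow>
     Ms = measure_support F \<and> compact Ms \<and>
     (\<forall>k. (\<lambda>d. t d k) \<in> borel_measurable borel \<and> bounded ((\<lambda>d. t d k) ` Ms)) \<and>
     v0 \<le> truthful_payoff kappa c t F \<and>
     (\<forall>G K. bayes_plausible mu G \<longrightarrow> integrable G c \<longrightarrow>
        K \<in> measurable G (subprob_algebra (restrict_space borel Ms)) \<longrightarrow>
        deviation_payoff kappa c v0 Ms t G K \<le> truthful_payoff kappa c t F)"

end

theory Submission
  imports Defs
begin

text \<open>For a report d, pay in state k the value of the tangent plane of \<open>\<kappa> c + v\<^sub>0\<close>
  at d at the k-th vertex of the simplex. The expected transfer at a
  posterior x after reporting d is then that tangent plane evaluated at x. By convexity it lies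
  below \<open>\<kappa> c(x) + v\<^sub>0\<close>, with equality for the truthful report d = x. So whatever
  information G the agent acquires and however he reports, he earns at most
  \<open>E\<^sub>G[\<kappa> c + v\<^sub>0] - C(G) = v\<^sub>0\<close>, which is exactly what the recommended
  strategy earns; the principal thus pays \<open>C(F) + v\<^sub>0\<close>. Smoothness of c makes the
  transfers continuous, hence bounded on the compact support of F.\<close>

lemma closed_measure_support: "closed (measure_support F)"
proof -
  have "- measure_support F = \<Union>{U. open U \<and> emeasure F U = 0}"
    unfolding measure_support_def by (auto simp: not_less)
  then show ?thesis
    unfolding closed_def by (metis (mono_tags, lifting) mem_Collect_eq open_Union)
qed

lemma AE_in_measure_support:
  fixes F :: "'a::second_countable_topology measure"
  assumes sets_F: "sets F = sets borel"
  shows "AE x in F. x \<in> measure_support F"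
proof -
  obtain B :: "'a set set" where B: "countable B" "topological_basis B"
    using ex_countable_basis by blast
  have open_B: "\<And>b. b \<in> B \<Longrightarrow> open b"
    using B(2) by (simp add: topological_basis_def)
  have "- measure_support F \<subseteq> (\<Union>b\<in>{b\<in>B. emeasure F b = 0}. b)"
  proof
    fix x assume "x \<in> - measure_support F"
    then obtain U where U: "open U" "x \<in> U" "emeasure F U = 0"
      unfolding measure_support_def by (auto simp: not_less)
    then obtain b where b: "b \<in> B" "x \<in> b" "b \<subseteq> U"
      using topological_basisE[OF B(2)] by blast
    have "emeasure F b \<le> emeasure F U"
      by (rule emeasure_mono) (use b U sets_F open_B in auto)
    then show "x \<in> (\<Union>b\<in>{b\<in>B. emeasure F b = 0}. b)" using b U by auto
  qed
  moreover have "(\<Union>b\<in>{b\<in>B. emeasure F b = 0}. b) \<in> null_sets F"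
    by (rule null_sets_UN') (use B(1) sets_F open_B in auto)
  ultimately show ?thesis
    by (intro AE_I') auto
qed

lemma belief_int_subset_simplex: "belief_int \<subseteq> belief_simplex"
  unfolding belief_int_def belief_simplex_def by (auto intro: less_imp_le)

lemma bounded_belief_int: "bounded (belief_int :: (real^'s::finite) set)"
proof -
  have "norm x \<le> 1" if "x \<in> belief_int" for x :: "real^'s"
  proof -
    have "norm x \<le> (\<Sum>i\<in>UNIV. \<bar>x$i\<bar>)" by (rule norm_le_l1_cart)
    also have "\<dots> = (\<Sum>i\<in>UNIV. x$i)"
      using that unfolding belief_int_def by (simp add: less_imp_le)
    finally show ?thesis using that unfolding belief_int_def by simp
  qed
  then show ?thesis unfolding bounded_iff by blast
qed

lemma compact_measure_support_if_subset_belief_int: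
  assumes "measure_support F \<subseteq> belief_int"
  shows "compact (measure_support F)"
  using closed_measure_support bounded_subset[OF bounded_belief_int assms]
  by (simp add: compact_eq_bounded_closed)

lemma segment_in_belief_int:
  fixes d x :: "real^'s::finite"
  assumes d: "d \<in> belief_int" and x: "x \<in> belief_simplex" and s: "0 \<le> s" "s < 1"
  shows "d + s *\<^sub>R (x - d) \<in> belief_int"
proof -
  have eq: "d + s *\<^sub>R (x - d) = s *\<^sub>R x + (1 - s) *\<^sub>R d" by (simp add: algebra_simps)
  have "0 < (s *\<^sub>R x + (1 - s) *\<^sub>R d) $ k" for k
  proof -
    have "0 \<le> s * x$k" using x s unfolding belief_simplex_def by simp
    moreover have "0 < (1 - s) * d$k" using d s unfolding belief_int_def by simp
    ultimately show ?thesis by simp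
  qed
  moreover have "(\<Sum>k\<in>UNIV. (s *\<^sub>R x + (1 - s) *\<^sub>R d) $ k) = 1"
    using x d unfolding belief_simplex_def belief_int_def
    by (simp add: sum.distrib sum_distrib_left[symmetric])
  ultimately show ?thesis unfolding eq belief_int_def by auto
qed

lemma strictly_convex_on_below_chord:
  assumes "strictly_convex_on S f" "x \<in> S" "y \<in> S" "0 < s" "s < 1"
  shows "f (y + s *\<^sub>R (x - y)) \<le> f y + s * (f x - f y)"
proof (cases "x = y")
  case False
  have "f (s *\<^sub>R x + (1 - s) *\<^sub>R y) < s * f x + (1 - s) * f y"
    using assms False unfolding strictly_convex_on_def by blast
  moreover have "y + s *\<^sub>R (x - y) = s *\<^sub>R x + (1 - s) *\<^sub>R y" by (simp add: algebra_simps)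
  ultimately show ?thesis by (simp add: algebra_simps)
qed simp

text \<open>f itself need not be differentiable at d: it suffices that it agrees with a
  differentiable g on the half-open segment from d to x.\<close>

lemma above_tangent_if_below_chords:
  fixes f g :: "'a::real_normed_vector \<Rightarrow> real"
  assumes deriv: "(g has_derivative L) (at d)"
    and agree: "\<And>s. 0 \<le> s \<Longrightarrow> s < 1 \<Longrightarrow> g (d + s *\<^sub>R (x - d)) = f (d + s *\<^sub>R (x - d))"
    and chord: "\<And>s. 0 < s \<Longrightarrow> s < 1 \<Longrightarrow> f (d + s *\<^sub>R (x - d)) \<le> f d + s * (f x - f d)"
  shows "f d + L (x - d) \<le> f x"
proof -
  define \<phi> where "\<phi> s = g (d + s *\<^sub>R (x - d))" for s :: real
  have line: "((\<lambda>s::real. d + s *\<^sub>R (x - d)) has_derivative (\<lambda>s. s *\<^sub>R (x - d))) (at 0)"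
    by (auto intro!: derivative_eq_intros)
  have "(\<phi> has_derivative (\<lambda>s. L (s *\<^sub>R (x - d)))) (at 0)"
    unfolding \<phi>_def using has_derivative_compose[OF line, of g] deriv by simp
  moreover have "L (s *\<^sub>R (x - d)) = L (x - d) * s" for s
    using has_derivative_linear[OF deriv] by (simp add: linear_scale)
  ultimately have "(\<phi> has_derivative (\<lambda>s. L (x - d) * s)) (at 0)"
    by (simp only:)
  then have "(\<phi> has_real_derivative L (x - d)) (at 0)"
    by (simp add: has_field_derivative_def)
  then have "((\<lambda>s. (\<phi> s - \<phi> 0) / s) \<longlongrightarrow> L (x - d)) (at_right 0)"
    by (simp add: has_field_derivative_iff filterlim_at_split)
  moreover have "eventually (\<lambda>s. (\<phi> s - \<phi> 0) / s \<le> f x - f d) (at_right (0::real))"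
    unfolding eventually_at_right_field
  proof (intro exI[of _ 1] conjI allI impI)
    fix s :: real assume s: "0 < s" "s < 1"
    then have "\<phi> s - \<phi> 0 \<le> s * (f x - f d)"
      using chord[OF s] agree[of s] agree[of 0] by (simp add: \<phi>_def)
    then show "(\<phi> s - \<phi> 0) / s \<le> f x - f d"
      using s by (simp add: divide_le_eq mult.commute)
  qed simp
  ultimately have "L (x - d) \<le> f x - f d"
    by (rule tendsto_upperbound) simp
  then show ?thesis by simp
qed

lemma strictly_convex_on_simplex_above_tangent:
  fixes c g :: "real^'s::finite \<Rightarrow> real"
  assumes c_strict: "strictly_convex_on belief_simplex c"
    and g_eq_c: "\<forall>y\<in>belief_int. g y = c y"
    and deriv: "(g has_derivative L) (at d)"
    and d: "d \<in> belief_int" and x: "x \<in> belief_simplex"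
  shows "c d + L (x - d) \<le> c x"
proof (rule above_tangent_if_below_chords[OF deriv])
  fix s :: real
  assume "0 \<le> s" "s < 1"
  then show "g (d + s *\<^sub>R (x - d)) = c (d + s *\<^sub>R (x - d))"
    using g_eq_c segment_in_belief_int[OF d x] by blast
next
  fix s :: real
  assume "0 < s" "s < 1"
  then show "c (d + s *\<^sub>R (x - d)) \<le> c d + s * (c x - c d)"
    using strictly_convex_on_below_chord[OF c_strict x] d belief_int_subset_simplex by blast
qed

text \<open>The value 0 for reports outside Ms only serves to make the transfer Borel measurable
  on the whole space.\<close>

definition tangent_transfer ::
  "real \<Rightarrow> real \<Rightarrow> (real^'s::finite \<Rightarrow> real) \<Rightarrow> (real^'s \<Rightarrow> (real^'s) \<Rightarrow>\<^sub>L real) \<Rightarrow> (real^'s) set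
    \<Rightarrow> real^'s \<Rightarrow> 's \<Rightarrow> real" where
  "tangent_transfer kappa v0 g D Ms d k =
     (if d \<in> Ms then kappa * (g d + blinfun_apply (D d) (axis k 1 - d)) + v0 else 0)"

lemma exp_transfer_tangent_transfer:
  fixes x d :: "real^'s::finite"
  assumes "d \<in> Ms" and sum_x: "(\<Sum>k\<in>UNIV. x$k) = 1"
  shows "exp_transfer (tangent_transfer kappa v0 g D Ms) x d
    = kappa * (g d + blinfun_apply (D d) (x - d)) + v0"
proof -
  have combination: "(\<Sum>k\<in>UNIV. x$k *\<^sub>R (axis k 1 - d)) = x - d"
  proof -
    have "(\<Sum>k\<in>UNIV. x$k *\<^sub>R (axis k 1 - d))
        = (\<Sum>k\<in>UNIV. x$k *\<^sub>R axis k 1) - (\<Sum>k\<in>UNIV. x$k) *\<^sub>R d"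
      by (simp add: scaleR_diff_right sum_subtractf scaleR_sum_left)
    then show ?thesis
      using basis_expansion[of x] sum_x by (simp add: scalar_mult_eq_scaleR)
  qed
  have vertices: "(\<Sum>k\<in>UNIV. x$k * blinfun_apply (D d) (axis k 1 - d))
      = blinfun_apply (D d) (x - d)"
    unfolding combination[symmetric] by (simp add: blinfun.sum_right blinfun.scaleR_right)
  have "exp_transfer (tangent_transfer kappa v0 g D Ms) x d
      = (\<Sum>k\<in>UNIV. x$k) * (kappa * g d + v0)
        + kappa * (\<Sum>k\<in>UNIV. x$k * blinfun_apply (D d) (axis k 1 - d))"
    using assms(1) unfolding exp_transfer_def tangent_transfer_def
    by (simp add: algebra_simps sum.distrib sum_distrib_left sum_distrib_right)
  then show ?thesis
    using sum_x vertices by (simp add: algebra_simps)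
qed

lemma
  fixes g :: "real^'s::finite \<Rightarrow> real"
  assumes "compact Ms" "continuous_on Ms g" "continuous_on Ms D"
  shows borel_measurable_tangent_transfer:
      "(\<lambda>d. tangent_transfer kappa v0 g D Ms d k) \<in> borel_measurable borel"
    and bounded_tangent_transfer: "bounded ((\<lambda>d. tangent_transfer kappa v0 g D Ms d k) ` Ms)"
proof -
  have cont: "continuous_on Ms (\<lambda>d. kappa * (g d + blinfun_apply (D d) (axis k 1 - d)) + v0)"
    using assms by (intro continuous_intros blinfun.continuous_on) auto
  show "(\<lambda>d. tangent_transfer kappa v0 g D Ms d k) \<in> borel_measurable borel"
    unfolding tangent_transfer_def using assms(1)
    by (intro borel_measurable_continuous_on_if cont) (auto simp: compact_imp_closed)
  have "(\<lambda>d. tangent_transfer kappa v0 g D Ms d k) ` Ms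
      = (\<lambda>d. kappa * (g d + blinfun_apply (D d) (axis k 1 - d)) + v0) ` Ms"
    by (auto simp: tangent_transfer_def)
  then show "bounded ((\<lambda>d. tangent_transfer kappa v0 g D Ms d k) ` Ms)"
    using compact_imp_bounded[OF compact_continuous_image[OF cont assms(1)]] by simp
qed

lemma bayes_plausibleD:
  assumes "bayes_plausible mu G"
  shows "prob_space G" "sets G = sets borel" "space G = UNIV" "AE x in G. x \<in> belief_simplex"
proof -
  show pG: "prob_space G" and sG: "sets G = sets borel"
    using assms by (auto simp: bayes_plausible_def)
  show "space G = UNIV" using sets_eq_imp_space_eq[OF sG] by simp
  have "measure G belief_simplex = 1" using assms by (auto simp: bayes_plausible_def measure_def)
  then show "AE x in G. x \<in> belief_simplex" using prob_space.AE_prob_1[OF pG] by blast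
qed

lemma subprob_report_payoff_le:
  assumes N: "subprob_space N" "space N = Ms"
    and f_le: "\<forall>d\<in>Ms. f d \<le> b" and v0: "0 \<le> v0" "v0 \<le> b"
  shows "(\<integral>d. f d \<partial>N) + (1 - measure N Ms) * v0 \<le> b"
proof -
  interpret subprob_space N by (rule N(1))
  define m where "m = measure N Ms"
  have m: "0 \<le> m" "m \<le> 1" unfolding m_def using subprob_measure_le_1 by auto
  have "(\<integral>d. f d \<partial>N) \<le> b * m"
  proof (cases "integrable N f")
    case True
    have "(\<integral>d. f d \<partial>N) \<le> (\<integral>d. b \<partial>N)"
      by (rule integral_mono[OF True]) (use f_le N(2) in auto)
    then show ?thesis using N(2) by (simp add: m_def mult.commute)
  qed (use m v0 in \<open>simp add: not_integrable_integral_eq\<close>)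
  moreover have "(1 - m) * v0 \<le> (1 - m) * b"
    using m v0 by (intro mult_left_mono) auto
  ultimately have "(\<integral>d. f d \<partial>N) + (1 - m) * v0 \<le> b * m + (1 - m) * b"
    by linarith
  then show ?thesis by (simp add: m_def algebra_simps)
qed

lemma deviation_payoff_le_outside_option:
  fixes G :: "(real^'s::finite) measure" and c :: "real^'s \<Rightarrow> real"
  assumes G: "bayes_plausible mu G" and int_c: "integrable G c"
    and K: "K \<in> measurable G (subprob_algebra (restrict_space borel Ms))"
    and c_nonneg: "\<forall>x\<in>belief_simplex. c x \<ge> 0" and v0: "v0 \<ge> 0" and kappa: "kappa > 0"
    and upper: "\<forall>x\<in>belief_simplex. \<forall>d\<in>Ms. exp_transfer t x d \<le> kappa * c x + v0"
  shows "deviation_payoff kappa c v0 Ms t G K \<le> v0"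
proof -
  note G = bayes_plausibleD[OF G]
  interpret prob_space G by (rule G(1))
  define payoff where
    "payoff x = (\<integral>d. exp_transfer t x d \<partial>(K x)) + (1 - measure (K x) Ms) * v0" for x
  have payoff_le: "payoff x \<le> kappa * c x + v0" if x: "x \<in> belief_simplex" for x
  proof -
    have "K x \<in> space (subprob_algebra (restrict_space borel Ms))"
      using measurable_space[OF K] G(3) by auto
    then have "subprob_space (K x)" "sets (K x) = sets (restrict_space borel Ms)"
      by (auto simp: space_subprob_algebra)
    moreover have "0 \<le> kappa * c x" using c_nonneg x kappa by simp
    ultimately show ?thesis
      unfolding payoff_def using upper x v0
      by (intro subprob_report_payoff_le)
        (auto dest: sets_eq_imp_space_eq simp: space_restrict_space)
  qed
  have "integral\<^sup>L G payoff \<le> (\<integral>x. kappa * c x + v0 \<partial>G)"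
  proof (cases "integrable G payoff")
    case True
    then show ?thesis
      by (rule integral_mono_AE) (use int_c payoff_le G(4) in auto)
  next
    case False
    have "0 \<le> integral\<^sup>L G c"
      by (rule integral_nonneg_AE) (use G(4) c_nonneg in auto)
    then show ?thesis using False int_c kappa v0 by (simp add: not_integrable_integral_eq prob_space)
  qed
  then show ?thesis
    using int_c unfolding deviation_payoff_def info_cost_def payoff_def[symmetric]
    by (simp add: prob_space)
qed

lemma implements_if_tight_upper_bound:
  fixes F :: "(real^'s::finite) measure" and t :: "real^'s \<Rightarrow> 's \<Rightarrow> real"
  assumes F: "bayes_plausible mu F" and Ms: "Ms = measure_support F" "compact Ms"
    and t: "\<And>k. (\<lambda>d. t d k) \<in> borel_measurable borel" "\<And>k. bounded ((\<lambda>d. t d k) ` Ms)"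
    and int_c: "integrable F c"
    and c_nonneg: "\<forall>x\<in>belief_simplex. c x \<ge> 0" and v0: "v0 \<ge> 0" and kappa: "kappa > 0"
    and upper: "\<forall>x\<in>belief_simplex. \<forall>d\<in>Ms. exp_transfer t x d \<le> kappa * c x + v0"
    and tight: "\<forall>d\<in>Ms. exp_transfer t d d = kappa * c d + v0"
  shows "implements mu kappa c v0 Ms t F \<and> principal_cost t F = info_cost kappa c F + v0"
proof -
  note F = bayes_plausibleD[OF F]
  interpret prob_space F by (rule F(1))
  have "principal_cost t F = (\<integral>x. kappa * c x + v0 \<partial>F)"
    unfolding principal_cost_def
  proof (rule integral_cong_AE)
    show "AE x in F. exp_transfer t x x = kappa * c x + v0"
      using AE_in_measure_support[OF F(2)] Ms(1) tight by auto
    show "(\<lambda>x. exp_transfer t x x) \<in> borel_measurable F"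
      unfolding exp_transfer_def measurable_cong_sets[OF F(2) refl] using t(1) by measurable
    show "(\<lambda>x. kappa * c x + v0) \<in> borel_measurable F"
      using int_c by measurable
  qed
  then have cost: "principal_cost t F = info_cost kappa c F + v0"
    using int_c by (simp add: prob_space info_cost_def)
  then have truthful: "truthful_payoff kappa c t F = v0"
    unfolding truthful_payoff_def principal_cost_def by simp
  have "implements mu kappa c v0 Ms t F"
    unfolding implements_def truthful
    using Ms t deviation_payoff_le_outside_option[OF _ _ _ c_nonneg v0 kappa upper] by blast
  with cost show ?thesis by blast
qed

text \<open>If c is not Borel measurable, no Bayes-plausible G has integrable cost, and the
  Bochner integral of c is the junk value 0; so the constant transfer \<open>v\<^sub>0\<close> already
  implements F at the (junk) first-best cost \<open>v\<^sub>0\<close>.\<close>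

lemma implements_constant_transfer_if_not_measurable:
  fixes F :: "(real^'s::finite) measure"
  assumes F: "bayes_plausible mu F" and c: "c \<notin> borel_measurable borel"
    and Ms: "Ms = measure_support F" "compact Ms"
  shows "implements mu kappa c v0 Ms (\<lambda>_ _. v0) F
    \<and> principal_cost (\<lambda>_ _. v0) F = info_cost kappa c F + v0"
proof -
  note F = bayes_plausibleD[OF F]
  interpret prob_space F by (rule F(1))
  have not_integrable: "\<not> integrable G c" if "bayes_plausible mu G" for G :: "(real^'s) measure"
    using c measurable_cong_sets[OF bayes_plausibleD(2)[OF that] refl] by blast
  have "principal_cost (\<lambda>_ _. v0) F = (\<integral>x. v0 \<partial>F)"
    unfolding principal_cost_def exp_transfer_def
  proof (rule integral_cong_AE)
    show "AE x in F. (\<Sum>k\<in>UNIV. x $ k * v0) = v0"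
      using F(4) by eventually_elim (simp add: belief_simplex_def flip: sum_distrib_right)
  qed (auto simp: measurable_cong_sets[OF F(2) refl])
  then have cost: "principal_cost (\<lambda>_ _. v0) F = info_cost kappa c F + v0"
    using not_integrable[OF assms(1)] by (simp add: prob_space info_cost_def not_integrable_integral_eq)
  moreover have "implements mu kappa c v0 Ms (\<lambda>_ _. v0) F"
    unfolding implements_def using Ms cost not_integrable
    by (auto simp: truthful_payoff_def principal_cost_def info_cost_def not_integrable_integral_eq
        image_constant_conv)
  ultimately show ?thesis by blast
qed

lemma C2_on_simplex_int_imp_C1:
  assumes "C2_on_simplex_int c"
  obtains g D where "\<forall>x\<in>belief_int. g x = c x"
    "\<forall>x\<in>belief_int. (g has_derivative blinfun_apply (D x)) (at x)"
    "continuous_on belief_int g" "continuous_on belief_int D"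
proof -
  obtain U g D D2 where U: "belief_int \<subseteq> U" and g: "\<forall>x\<in>belief_int. g x = c x"
    and Dg: "\<forall>x\<in>U. (g has_derivative blinfun_apply (D x)) (at x)"
    and DD: "\<forall>x\<in>U. (D has_derivative blinfun_apply (D2 x)) (at x)"
    using assms unfolding C2_on_simplex_int_def C2_on_def by blast
  have "continuous_on belief_int g" "continuous_on belief_int D"
    using U Dg DD
    by (auto intro!: continuous_at_imp_continuous_on dest: has_derivative_continuous)
  with g Dg U show thesis by (intro that[of g D]) blast+
qed

lemma tangent_transfer_implements:
  fixes F :: "(real^'s::finite) measure" and c g :: "real^'s \<Rightarrow> real"
  assumes F: "bayes_plausible mu F" and supp: "measure_support F \<subseteq> belief_int"
    and c_nonneg: "\<forall>x\<in>belief_simplex. c x \<ge> 0"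
    and c_strict: "strictly_convex_on belief_simplex c"
    and c_bounded: "bounded (c ` belief_int)" and c_meas: "c \<in> borel_measurable borel"
    and v0: "v0 \<ge> 0" and kappa: "kappa > 0"
    and g_eq_c: "\<forall>x\<in>belief_int. g x = c x"
    and deriv: "\<forall>x\<in>belief_int. (g has_derivative blinfun_apply (D x)) (at x)"
    and cont: "continuous_on belief_int g" "continuous_on belief_int D"
  defines "Ms \<equiv> measure_support F"
  shows "implements mu kappa c v0 Ms (tangent_transfer kappa v0 g D Ms) F
    \<and> principal_cost (tangent_transfer kappa v0 g D Ms) F = info_cost kappa c F + v0"
proof (rule implements_if_tight_upper_bound[OF F Ms_def[THEN meta_eq_to_obj_eq]])
  have Ms: "Ms \<subseteq> belief_int" "compact Ms"
    using supp compact_measure_support_if_subset_belief_int by (auto simp: Ms_def)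
  then show "compact Ms" by blast
  have cont_Ms: "continuous_on Ms g" "continuous_on Ms D"
    using continuous_on_subset[OF cont(1) Ms(1)] continuous_on_subset[OF cont(2) Ms(1)] .
  show "(\<lambda>d. tangent_transfer kappa v0 g D Ms d k) \<in> borel_measurable borel"
    and "bounded ((\<lambda>d. tangent_transfer kappa v0 g D Ms d k) ` Ms)" for k
    using borel_measurable_tangent_transfer bounded_tangent_transfer Ms(2) cont_Ms by blast+
  obtain B where B: "\<forall>x\<in>belief_int. norm (c x) \<le> B"
    using c_bounded unfolding bounded_iff by auto
  interpret prob_space F using bayes_plausibleD(1)[OF F] .
  show "integrable F c"
  proof (rule integrable_const_bound)
    show "AE x in F. norm (c x) \<le> B"
      using AE_in_measure_support[OF bayes_plausibleD(2)[OF F]] Ms(1) B by (auto simp: Ms_def)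
    show "c \<in> borel_measurable F"
      using c_meas measurable_cong_sets[OF bayes_plausibleD(2)[OF F] refl] by blast
  qed
  show "\<forall>x\<in>belief_simplex. \<forall>d\<in>Ms. exp_transfer (tangent_transfer kappa v0 g D Ms) x d
      \<le> kappa * c x + v0"
  proof (intro ballI)
    fix x d :: "real^'s" assume x: "x \<in> belief_simplex" and d: "d \<in> Ms"
    then have "c d + blinfun_apply (D d) (x - d) \<le> c x"
      using strictly_convex_on_simplex_above_tangent[OF c_strict g_eq_c] deriv Ms(1) by blast
    moreover have "g d = c d" using g_eq_c d Ms(1) by blast
    ultimately show "exp_transfer (tangent_transfer kappa v0 g D Ms) x d \<le> kappa * c x + v0"
      using exp_transfer_tangent_transfer[OF d] x kappa
      by (simp add: belief_simplex_def)
  qed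
  show "\<forall>d\<in>Ms. exp_transfer (tangent_transfer kappa v0 g D Ms) d d = kappa * c d + v0"
  proof
    fix d assume d: "d \<in> Ms"
    then have "d \<in> belief_int" using Ms(1) by blast
    then show "exp_transfer (tangent_transfer kappa v0 g D Ms) d d = kappa * c d + v0"
      using exp_transfer_tangent_transfer[OF d] g_eq_c by (simp add: belief_int_def)
  qed
qed (use c_nonneg v0 kappa in auto)

theorem proposition2:
  fixes mu :: "real^'s::finite"
    and kappa v0 :: real
    and c :: "real^'s \<Rightarrow> real"
    and F :: "(real^'s) measure"
  assumes mu_int: "mu \<in> belief_int"
    and kappa_pos: "kappa > 0"
    and v0_nonneg: "v0 \<ge> 0"
    and c_nonneg: "\<forall>x\<in>belief_simplex. c x \<ge> 0"
    and c_strict: "strictly_convex_on belief_simplex c"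
    and c_C2: "C2_on_simplex_int c"
    and c_bounded: "bounded (c ` belief_int)"
    and c_mu: "c mu = 0"
    and F_bp: "bayes_plausible mu F"
    and F_supp: "measure_support F \<subseteq> belief_int"
  shows "\<exists>Ms t. implements mu kappa c v0 Ms t F \<and>
                principal_cost t F = info_cost kappa c F + v0"
proof (cases "c \<in> borel_measurable borel")
  case True
  obtain g D where "\<forall>x\<in>belief_int. g x = c x"
    "\<forall>x\<in>belief_int. (g has_derivative blinfun_apply (D x)) (at x)"
    "continuous_on belief_int g" "continuous_on belief_int D"
    using C2_on_simplex_int_imp_C1[OF c_C2] by blast
  then show ?thesis
    using tangent_transfer_implements[OF F_bp F_supp c_nonneg c_strict c_bounded True
        v0_nonneg kappa_pos] by blast
next
  case False
  then show ?thesis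
    using implements_constant_transfer_if_not_measurable[OF F_bp False refl
        compact_measure_support_if_subset_belief_int[OF F_supp]] by blast
qed

end
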